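(* Let $k\ge1$ and $m\ge0$. The largest positive integer $n\in A_{2k}$ with $\max\mathcal{CG}(n)=F_{2k+2m}$ is $$F_{2k}+F_{2k+2}+\cdots+F_{2k+2m-2}+2F_{2k+2m}$$ (for $m=0$ this is $2F_{2k}$).
   Context: Fibonacci numbers: $F_1=F_2=1$, $F_{n+1}=F_n+F_{n-1}$ for $n\ge2$. Chung–Graham decomposition: every positive integer $n$ has a unique representation $n=\sum_{i\ge1}c_iF_{2i}$ with $c_i\in\{0,1,2\}$, only finitely many nonzero, such that whenever $c_i=c_j=2$ with $i<j$ there is $k$ with $i<k<j$ and $c_k=0$. Let $\mathcal{CG}(n)$ be the set of $F_{2i}$ with $c_i\neq0$. For $k\ge1$, $A_{2k}=\{n\ge1:\min\mathcal{CG}(n)=F_{2k}\}$. *)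

theory Defs
  imports "HOL-Number_Theory.Fib"
begin

definition cg_rep :: "nat \<Rightarrow> (nat \<Rightarrow> nat) \<Rightarrow> bool" where
  "cg_rep n c \<longleftrightarrow>
     c 0 = 0 \<and> (\<forall>i. c i \<le> 2) \<and> finite {i. c i \<noteq> 0} \<and>
     (\<forall>i j. 1 \<le> i \<and> i < j \<and> c i = 2 \<and> c j = 2 \<longrightarrow> (\<exists>k. i < k \<and> k < j \<and> c k = 0)) \<and>
     n = (\<Sum>i\<in>{i. c i \<noteq> 0}. c i * fib (2 * i))"

definition cg_coeffs :: "nat \<Rightarrow> (nat \<Rightarrow> nat)" where
  "cg_coeffs n = (THE c. cg_rep n c)"

definition CG :: "nat \<Rightarrow> nat set" where
  "CG n = {fib (2 * i) | i. 1 \<le> i \<and> cg_coeffs n i \<noteq> 0}"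

definition A_even :: "nat \<Rightarrow> nat set" where
  "A_even k = {n. 1 \<le> n \<and> Min (CG n) = fib (2 * k)}"

end

theory Submission
  imports Defs
begin

declare fib2 [simp del]

text \<open>The key estimate is
  (\<Sum>i\<le>N. c i F(2i)) + F(2k+1) \<le> F(2N+2) for admissible c vanishing at all indices \<le> k,
  improving to F(2N+1) when c is closed at N; it follows by induction on N from
  F(2N+4) = 2F(2N+2) + F(2N+1) and F(2N+3) = F(2N+2) + F(2N+1). For k = 0 it says that
  the lower digits contribute less than the next Fibonacci number, so the top digit is
  determined by the sum: this gives uniqueness, and a greedy choice of the top digit
  gives existence. If n \<in> A(2k) and max CG(n) = F(2k+2m), the digits of n vanish below k
  and above k+m, so n + F(2k-1) \<le> F(2k+2m+2), and the right-hand side is exactly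
  F(2k-1) plus the claimed maximizer, whose digits are 1 at k..k+m-1 and 2 at k+m.\<close>

abbreviation cg_sum :: "(nat \<Rightarrow> nat) \<Rightarrow> nat \<Rightarrow> nat" where
  "cg_sum c N \<equiv> \<Sum>i\<le>N. c i * fib (2 * i)"

definition cg_separated :: "(nat \<Rightarrow> nat) \<Rightarrow> bool" where
  "cg_separated c \<longleftrightarrow>
     (\<forall>i j. 1 \<le> i \<and> i < j \<and> c i = 2 \<and> c j = 2 \<longrightarrow> (\<exists>k. i < k \<and> k < j \<and> c k = 0))"

definition cg_admissible :: "(nat \<Rightarrow> nat) \<Rightarrow> bool" where
  "cg_admissible c \<longleftrightarrow> c 0 = 0 \<and> (\<forall>i. c i \<le> 2) \<and> cg_separated c"

definition cg_closed :: "(nat \<Rightarrow> nat) \<Rightarrow> nat \<Rightarrow> bool" where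
  "cg_closed c N \<longleftrightarrow> (\<forall>j. 1 \<le> j \<and> j \<le> N \<and> c j = 2 \<longrightarrow> (\<exists>k. j < k \<and> k \<le> N \<and> c k = 0))"

lemma fib_odd_Suc: "fib (2 * Suc N + 1) = fib (2 * N + 2) + fib (2 * N + 1)"
  using fib_plus_2[of "2 * N + 1"] by (simp add: numeral_eq_Suc)

lemma fib_even_Suc: "fib (2 * Suc N + 2) = 2 * fib (2 * N + 2) + fib (2 * N + 1)"
  using fib_plus_2[of "2 * N + 2"] fib_odd_Suc[of N] by (simp add: numeral_eq_Suc)

lemma fib_even_strict_mono: "i < j \<Longrightarrow> fib (2 * i) < fib (2 * j)"
proof -
  assume "i < j"
  then obtain j' where j: "j = Suc j'" and "i \<le> j'" by (cases j) auto
  then have "fib (2 * i) \<le> fib (2 * j')" by (simp add: fib_mono)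
  moreover have "fib (2 * j) = fib (2 * j' + 1) + fib (2 * j')"
    using fib_plus_2[of "2 * j'"] j by simp
  moreover have "0 < fib (2 * j' + 1)" by (simp add: fib_neq_0_nat)
  ultimately show ?thesis by linarith
qed

lemma less_fib_even: "n < fib (2 * n + 2)"
proof (induction n)
  case 0
  show ?case by (simp add: fib2)
next
  case (Suc n)
  have "0 < fib (2 * n + 1)" by (simp add: fib_neq_0_nat)
  with Suc.IH show ?case using fib_even_Suc[of n] by linarith
qed

lemma fib_plus_sum_even: "fib (a + 1) + (\<Sum>j<m. fib (a + 2 + 2 * j)) = fib (a + 2 * m + 1)"
proof (induction m)
  case 0
  show ?case by simp
next
  case (Suc m)
  then show ?case
    using fib_plus_2[of "a + 2 * m + 1"] by (simp add: algebra_simps)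
qed

lemma fib_even_block_identity:
  "(\<Sum>j<m. fib (2 * Suc k + 2 * j)) + 2 * fib (2 * Suc k + 2 * m) + fib (2 * k + 1)
     = fib (2 * (Suc k + m) + 2)"
proof -
  have "fib (2 * k + 1) + (\<Sum>j<m. fib (2 * Suc k + 2 * j)) = fib (2 * (k + m) + 1)"
    using fib_plus_sum_even[of "2 * k" m] by (simp add: algebra_simps)
  moreover have "fib (2 * Suc k + 2 * m) = fib (2 * (k + m) + 2)" by (simp add: algebra_simps)
  ultimately show ?thesis using fib_even_Suc[of "k + m"] by simp
qed

lemma cg_closed_Suc_not_two: "cg_closed c (Suc N) \<Longrightarrow> c (Suc N) \<noteq> 2"
  unfolding cg_closed_def by fastforce

lemma cg_closed_SucD: "cg_closed c (Suc N) \<Longrightarrow> c (Suc N) \<noteq> 0 \<Longrightarrow> cg_closed c N"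
  unfolding cg_closed_def by (metis le_Suc_eq le_SucI)

lemma cg_closed_upd_zero: "cg_closed (c(Suc N := 0)) (Suc N)"
  unfolding cg_closed_def by (metis fun_upd_apply le_neq_implies_less le_refl zero_neq_numeral)

lemma cg_closed_upd: "cg_closed c N \<Longrightarrow> v \<noteq> 2 \<Longrightarrow> cg_closed (c(Suc N := v)) (Suc N)"
  unfolding cg_closed_def by (metis fun_upd_apply le_Suc_eq le_SucI Suc_n_not_le_n)

lemma cg_separated_imp_closed: "cg_separated c \<Longrightarrow> c (Suc N) = 2 \<Longrightarrow> cg_closed c N"
  unfolding cg_separated_def cg_closed_def by (metis less_Suc_eq_le le_imp_less_Suc)

lemma cg_admissible_upd:
  assumes adm: "cg_admissible c" and zero: "\<forall>i>N. c i = 0" and "v \<le> 2"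
    and closed: "v = 2 \<Longrightarrow> cg_closed c N"
  shows "cg_admissible (c(Suc N := v))"
proof -
  let ?c = "c(Suc N := v)"
  have "\<exists>k. i < k \<and> k < j \<and> ?c k = 0" if ij: "1 \<le> i" "i < j" "?c i = 2" "?c j = 2" for i j
  proof -
    have "j \<le> Suc N"
    proof (rule ccontr)
      assume "\<not> j \<le> Suc N"
      then have "?c j = 0" using zero by simp
      with ij(4) show False by simp
    qed
    with ij have i: "i \<le> N" "c i = 2" by auto
    show ?thesis
    proof (cases "j = Suc N")
      case True
      then obtain k where "i < k" "k \<le> N" "c k = 0"
        using closed ij(4) i ij(1) unfolding cg_closed_def by auto
      with True show ?thesis by (intro exI[of _ k]) auto
    next
      case False
      with ij \<open>j \<le> Suc N\<close> have "c j = 2" "j \<le> N" by auto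
      then obtain k where "i < k" "k < j" "c k = 0"
        using adm ij(1,2) i unfolding cg_admissible_def cg_separated_def by blast
      with \<open>j \<le> N\<close> show ?thesis by (intro exI[of _ k]) auto
    qed
  qed
  moreover have "?c 0 = 0" "\<forall>i. ?c i \<le> 2" using adm \<open>v \<le> 2\<close> unfolding cg_admissible_def by auto
  ultimately show ?thesis unfolding cg_admissible_def cg_separated_def by blast
qed

lemma cg_sum_bound:
  assumes digits: "\<forall>i. c i \<le> 2" and sep: "cg_separated c"
    and low: "\<forall>i\<le>k. c i = 0" and "k \<le> N"
  shows "cg_sum c N + fib (2 * k + 1) \<le> fib (2 * N + 2)
       \<and> (cg_closed c N \<longrightarrow> cg_sum c N + fib (2 * k + 1) \<le> fib (2 * N + 1))"
  using \<open>k \<le> N\<close>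
proof (induction N rule: dec_induct)
  case base
  have "cg_sum c k = 0" by (rule sum.neutral) (simp add: low)
  then show ?case using fib_mono[of "2 * k + 1" "2 * k + 2"] by linarith
next
  case (step N)
  define s where "s = cg_sum c N + fib (2 * k + 1)"
  define F where "F = fib (2 * N + 2)"
  define G where "G = fib (2 * N + 1)"
  have IH: "s \<le> F" "cg_closed c N \<Longrightarrow> s \<le> G"
    using step.IH unfolding s_def F_def G_def by auto
  have sum: "cg_sum c (Suc N) + fib (2 * k + 1) = s + c (Suc N) * F"
    unfolding s_def F_def by simp
  have odd: "fib (2 * Suc N + 1) = F + G" and even: "fib (2 * Suc N + 2) = 2 * F + G"
    unfolding F_def G_def by (fact fib_odd_Suc fib_even_Suc)+
  consider "c (Suc N) = 0" | "c (Suc N) = 1" | "c (Suc N) = 2"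
    using digits[rule_format, of "Suc N"] by linarith
  then show ?case
  proof cases
    case 1
    then show ?thesis unfolding sum odd even using IH(1) by simp
  next
    case 2
    then have "cg_closed c (Suc N) \<Longrightarrow> s \<le> G" using cg_closed_SucD IH(2) by simp
    then show ?thesis unfolding sum odd even using 2 IH(1) by simp
  next
    case 3
    then show ?thesis unfolding sum odd even
      using IH(2)[OF cg_separated_imp_closed[OF sep 3]] cg_closed_Suc_not_two[of c N] by auto
  qed
qed

lemma cg_sum_less:
  assumes "cg_admissible c" shows "cg_sum c N < fib (2 * N + 2)"
proof -
  have "\<forall>i\<le>0. c i = 0" using assms unfolding cg_admissible_def by simp
  then show ?thesis
    using cg_sum_bound[of c 0 N] assms unfolding cg_admissible_def by simp
qed

lemma cg_sum_upd: "cg_sum (c(Suc N := v)) (Suc N) = cg_sum c N + v * fib (2 * N + 2)"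
proof -
  have "cg_sum (c(Suc N := v)) N = cg_sum c N" by (intro sum.cong) auto
  then show ?thesis by simp
qed

text \<open>Greedy choice of the top digit. When it is 2 the remainder is below F(2N+1), so by
  induction the prefix is closed, as the separation condition requires.\<close>

lemma cg_sum_exists:
  "r < fib (2 * N + 2) \<Longrightarrow> \<exists>c. cg_admissible c \<and> (\<forall>i>N. c i = 0) \<and> cg_sum c N = r
     \<and> (r < fib (2 * N + 1) \<longrightarrow> cg_closed c N)"
proof (induction N arbitrary: r)
  case 0
  then have "r = 0" by (simp add: fib2)
  then show ?case
    by (intro exI[of _ "\<lambda>_. 0"]) (simp add: cg_admissible_def cg_separated_def cg_closed_def)
next
  case (Suc N)
  define F where "F = fib (2 * N + 2)"
  define G where "G = fib (2 * N + 1)"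
  have "G \<le> F" unfolding F_def G_def by (simp add: fib_mono)
  have odd: "fib (2 * Suc N + 1) = F + G" and even: "fib (2 * Suc N + 2) = 2 * F + G"
    unfolding F_def G_def by (fact fib_odd_Suc fib_even_Suc)+
  have extend: "\<exists>c. cg_admissible c \<and> (\<forall>i>Suc N. c i = 0) \<and> cg_sum c (Suc N) = r
       \<and> (r < fib (2 * Suc N + 1) \<longrightarrow> cg_closed c (Suc N))"
    if v: "v \<le> 2" "v * F \<le> r" "r - v * F < F" and top: "v = 2 \<Longrightarrow> r - v * F < G"
      and closed: "r < F + G \<Longrightarrow> v = 0 \<or> v = 1 \<and> r - v * F < G"
    for v
  proof -
    obtain c where c: "cg_admissible c" "\<forall>i>N. c i = 0" "cg_sum c N = r - v * F"
      and cl: "r - v * F < G \<Longrightarrow> cg_closed c N"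
      using Suc.IH[of "r - v * F"] v unfolding F_def G_def by auto
    have "cg_admissible (c(Suc N := v))" using cg_admissible_upd c v top cl by blast
    moreover have "\<forall>i>Suc N. (c(Suc N := v)) i = 0" using c(2) by simp
    moreover have "cg_sum (c(Suc N := v)) (Suc N) = r"
      using c(3) v cg_sum_upd[of c N v] unfolding F_def by simp
    moreover have "cg_closed (c(Suc N := v)) (Suc N)" if "r < F + G"
      using closed[OF that] cl cg_closed_upd_zero cg_closed_upd[of c N v] by auto
    ultimately show ?thesis unfolding odd by blast
  qed
  consider "r < F" | "F \<le> r" "r < 2 * F" | "2 * F \<le> r" by linarith
  then show ?case
  proof cases
    case 1
    then show ?thesis by (intro extend[of 0]) auto
  next
    case 2
    then show ?thesis by (intro extend[of 1]) auto
  next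
    case 3
    then show ?thesis using Suc.prems \<open>G \<le> F\<close> unfolding even by (intro extend[of 2]) auto
  qed
qed

lemma cg_sum_inj:
  assumes "cg_admissible c" "cg_admissible d" "cg_sum c N = cg_sum d N"
  shows "\<forall>i\<le>N. c i = d i"
  using assms(3)
proof (induction N)
  case 0
  then show ?case using assms(1,2) unfolding cg_admissible_def by simp
next
  case (Suc N)
  define F where "F = fib (2 * N + 2)"
  have eq: "cg_sum c N + c (Suc N) * F = cg_sum d N + d (Suc N) * F"
    using Suc.prems unfolding F_def by simp
  have "cg_sum c N < F" "cg_sum d N < F"
    using cg_sum_less assms(1,2) unfolding F_def by auto
  then have "(cg_sum c N + c (Suc N) * F) div F = c (Suc N)"
    "(cg_sum d N + d (Suc N) * F) div F = d (Suc N)" by simp_all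
  then have top: "c (Suc N) = d (Suc N)" using eq by simp
  then have "cg_sum c N = cg_sum d N" using eq by simp
  then show ?case using Suc.IH top by (auto simp: le_Suc_eq)
qed

lemma cg_rep_iff:
  assumes "\<forall>i>N. c i = 0"
  shows "cg_rep n c \<longleftrightarrow> cg_admissible c \<and> n = cg_sum c N"
proof -
  have supp: "{i. c i \<noteq> 0} \<subseteq> {..N}" using assms by (auto intro: leI)
  then have "(\<Sum>i\<in>{i. c i \<noteq> 0}. c i * fib (2 * i)) = cg_sum c N"
    by (intro sum.mono_neutral_left) auto
  with finite_subset[OF supp] show ?thesis
    unfolding cg_rep_def cg_admissible_def cg_separated_def by auto
qed

lemma cg_rep_exists: "\<exists>c. cg_rep n c"
proof -
  obtain c where "cg_admissible c" "\<forall>i>n. c i = 0" "cg_sum c n = n"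
    using cg_sum_exists[OF less_fib_even[of n]] by blast
  then have "cg_rep n c" using cg_rep_iff[of n c n] by simp
  then show ?thesis by blast
qed

lemma cg_rep_unique:
  assumes "cg_rep n c" "cg_rep n d" shows "c = d"
proof -
  have "finite ({i. c i \<noteq> 0} \<union> {i. d i \<noteq> 0})" using assms unfolding cg_rep_def by simp
  then obtain N where "\<forall>i\<in>{i. c i \<noteq> 0} \<union> {i. d i \<noteq> 0}. i \<le> N"
    using finite_nat_set_iff_bounded_le by blast
  then have zero: "\<forall>i>N. c i = 0" "\<forall>i>N. d i = 0" by (blast dest: leD)+
  have "cg_admissible c" "cg_admissible d" "cg_sum c N = cg_sum d N"
    using assms cg_rep_iff[OF zero(1)] cg_rep_iff[OF zero(2)] by auto
  then have low: "\<forall>i\<le>N. c i = d i" by (rule cg_sum_inj)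
  show ?thesis
  proof
    fix i
    show "c i = d i" using low zero by (cases "i \<le> N") auto
  qed
qed

lemma cg_coeffs_eq: "cg_rep n c \<Longrightarrow> cg_coeffs n = c"
  unfolding cg_coeffs_def by (rule the_equality) (auto intro: cg_rep_unique)

lemma cg_rep_cg_coeffs: "cg_rep n (cg_coeffs n)"
proof -
  obtain c where "cg_rep n c" using cg_rep_exists by blast
  then show ?thesis using cg_coeffs_eq by simp
qed

lemma CG_eq_image: "CG n = (\<lambda>i. fib (2 * i)) ` {i. cg_coeffs n i \<noteq> 0}"
proof -
  have "cg_coeffs n 0 = 0" using cg_rep_cg_coeffs unfolding cg_rep_def by simp
  then have "{i. 1 \<le> i \<and> cg_coeffs n i \<noteq> 0} = {i. cg_coeffs n i \<noteq> 0}"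
    by (auto simp: Suc_le_eq intro: gr0I)
  then show ?thesis unfolding CG_def setcompr_eq_image by simp
qed

lemma cg_coeffs_outside_range:
  assumes "Min (CG n) = fib (2 * k)" "Max (CG n) = fib (2 * l)" "i < k \<or> l < i"
  shows "cg_coeffs n i = 0"
proof (rule ccontr)
  assume "cg_coeffs n i \<noteq> 0"
  then have mem: "fib (2 * i) \<in> CG n" unfolding CG_eq_image by simp
  have "finite {i. cg_coeffs n i \<noteq> 0}" using cg_rep_cg_coeffs unfolding cg_rep_def by simp
  then have fin: "finite (CG n)" unfolding CG_eq_image by simp
  have "fib (2 * k) \<le> fib (2 * i)" "fib (2 * i) \<le> fib (2 * l)"
    using Min_le[OF fin mem] Max_ge[OF fin mem] assms(1,2) by simp_all
  with assms(3) fib_even_strict_mono show False by (meson leD)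
qed

lemma cg_sum_block:
  assumes "c = (\<lambda>i. if k \<le> i \<and> i < k + m then 1 else if i = k + m then 2 else 0)"
  shows "cg_sum c (k + m) = (\<Sum>j<m. fib (2 * k + 2 * j)) + 2 * fib (2 * k + 2 * m)"
proof -
  have "cg_sum c (k + m) = (\<Sum>i<k + m. c i * fib (2 * i)) + 2 * fib (2 * k + 2 * m)"
    using assms by (simp add: lessThan_Suc_atMost[symmetric] algebra_simps)
  also have "(\<Sum>i<k + m. c i * fib (2 * i)) = (\<Sum>i\<in>{k..<k + m}. fib (2 * i))"
    by (rule sum.mono_neutral_cong_right) (auto simp: assms)
  also have "\<dots> = (\<Sum>j<m. fib (2 * k + 2 * j))"
    using sum.shift_bounds_nat_ivl[of "\<lambda>i. fib (2 * i)" 0 k m]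
    by (simp add: atLeast0LessThan algebra_simps)
  finally show ?thesis .
qed

lemma CG_block:
  assumes "1 \<le> k"
  shows "CG ((\<Sum>j<m. fib (2 * k + 2 * j)) + 2 * fib (2 * k + 2 * m)) = (\<lambda>i. fib (2 * i)) ` {k..k + m}"
proof -
  define c where "c = (\<lambda>i. if k \<le> i \<and> i < k + m then 1 else if i = k + m then 2 else 0::nat)"
  have "cg_admissible c"
    using assms unfolding cg_admissible_def cg_separated_def c_def by auto
  moreover have "\<forall>i>k + m. c i = 0" unfolding c_def by simp
  ultimately have rep: "cg_rep ((\<Sum>j<m. fib (2 * k + 2 * j)) + 2 * fib (2 * k + 2 * m)) c"
    using cg_rep_iff cg_sum_block[OF c_def] by simp
  have "{i. c i \<noteq> 0} = {k..k + m}" unfolding c_def by auto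
  then show ?thesis unfolding CG_eq_image cg_coeffs_eq[OF rep] by simp
qed

lemma A_even_Max_bound:
  assumes "n \<in> A_even (Suc k)" "Max (CG n) = fib (2 * (Suc k + m))"
  shows "n + fib (2 * k + 1) \<le> fib (2 * (Suc k + m) + 2)"
proof -
  have zero: "cg_coeffs n i = 0" if "i \<le> k \<or> Suc k + m < i" for i
    using cg_coeffs_outside_range[of n "Suc k" "Suc k + m" i] assms that
    unfolding A_even_def by auto
  then have "cg_admissible (cg_coeffs n)" "n = cg_sum (cg_coeffs n) (Suc k + m)"
    using cg_rep_iff[of "Suc k + m" "cg_coeffs n" n] cg_rep_cg_coeffs[of n] by auto
  with zero show ?thesis
    using cg_sum_bound[of "cg_coeffs n" k "Suc k + m"] unfolding cg_admissible_def by auto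
qed

theorem lemma3p1:
  fixes k m :: nat
  assumes "1 \<le> k"
  shows "(\<Sum>j<m. fib (2*k + 2*j)) + 2 * fib (2*k + 2*m)
           \<in> {n. n \<in> A_even k \<and> Max (CG n) = fib (2*k + 2*m)}
       \<and> (\<forall>n. n \<in> A_even k \<and> Max (CG n) = fib (2*k + 2*m) \<longrightarrow>
             n \<le> (\<Sum>j<m. fib (2*k + 2*j)) + 2 * fib (2*k + 2*m))"
proof -
  define S where "S = (\<Sum>j<m. fib (2*k + 2*j)) + 2 * fib (2*k + 2*m)"
  obtain k' where k: "k = Suc k'" using assms by (cases k) auto
  have top: "fib (2*k + 2*m) = fib (2 * (k + m))" by (simp add: algebra_simps)
  have CG_S: "CG S = (\<lambda>i. fib (2 * i)) ` {k..k + m}" using CG_block[OF assms] unfolding S_def .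
  have "Min (CG S) = fib (2 * k)"
    unfolding CG_S by (rule Min_eqI) (auto intro: fib_mono)
  moreover have "Max (CG S) = fib (2 * (k + m))"
    unfolding CG_S by (rule Max_eqI) (auto intro: fib_mono image_eqI[of _ _ "k + m"])
  moreover have "1 \<le> S" using assms fib_neq_0_nat[of "2*k + 2*m"] unfolding S_def by simp
  ultimately have "S \<in> A_even k" "Max (CG S) = fib (2 * (k + m))" unfolding A_even_def by auto
  moreover have "n \<le> S" if "n \<in> A_even k" "Max (CG n) = fib (2 * (k + m))" for n
    using A_even_Max_bound[of n k' m] fib_even_block_identity[where k = k' and m = m] that
    unfolding S_def k by simp
  ultimately show ?thesis unfolding S_def top by blast
qed

end
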